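(* Let $m,k\ge 1$ and let $\Delta\in\mathbb{R}^{m\times k}$ be a matrix such that (a) each row of $\Delta$ has at most one nonzero entry, and (b) for every column index $i\in\{1,\dots,k\}$ there exists a row $a$ with $\Delta_{a,i}\neq 0$. Let $\mathbf{L}\in\mathbb{R}^{k\times k}$ be invertible and set $\hat\Delta:=\Delta\mathbf{L}$. If $\|\hat\Delta\|_0\le\|\Delta\|_0$, then $\mathbf{L}$ is a permutation-scaling matrix, i.e. $\mathbf{L}=\mathbf{P}\mathbf{D}$ for a permutation matrix $\mathbf{P}$ and an invertible diagonal matrix $\mathbf{D}$.
   Context: $\|M\|_0$ denotes the number of nonzero entries of a matrix $M$. In the paper, the rows of $\Delta$ are the parameter-change vectors $\delta_a$ indexed by the arcs $a$ of a tree of environments (so $m=|\mathcal{A}|$), and $k$ is the latent dimension. *)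

theory Defs
  imports "HOL-Analysis.Analysis"
begin

definition nnz :: "real^'n^'m \<Rightarrow> nat" where
  "nnz M = card {(a, i). M $ a $ i \<noteq> 0}"

definition permutation_matrix :: "real^'n^'n \<Rightarrow> bool" where
  "permutation_matrix P \<longleftrightarrow>
     (\<exists>\<sigma>. bij \<sigma> \<and> (\<forall>i j. P $ i $ j = (if i = \<sigma> j then 1 else 0)))"

definition diagonal_matrix :: "real^'n^'n \<Rightarrow> bool" where
  "diagonal_matrix D \<longleftrightarrow> (\<forall>i j. i \<noteq> j \<longrightarrow> D $ i $ j = 0)"

end

theory Submission
  imports Defs
begin

(* Since every row of Delta has a single nonzero entry Delta_ai, row a of
   Delta L is Delta_ai times row i of L, so it has exactly as many nonzeros as row i of L;
   invertibility forces this to be at least one. Summing over the rows, the hypothesis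
   nnz (Delta L) <= nnz Delta forces equality in every row, and since every column index i
   occurs in some row of Delta, every row of L has exactly one nonzero entry. An invertible
   matrix with this property has no zero column, so the nonzero positions form the graph of
   a permutation, i.e. L is a permutation-scaling matrix. *)

definition row_support :: "('a::zero)^'n^'m \<Rightarrow> 'm \<Rightarrow> 'n set" where
  "row_support M a = {j. M $ a $ j \<noteq> 0}"

lemma nnz_eq_sum_card_row_support: "nnz M = (\<Sum>a\<in>UNIV. card (row_support M a))"
proof -
  have "{(a, i). M $ a $ i \<noteq> 0} = (SIGMA a:UNIV. row_support M a)"
    by (auto simp: row_support_def)
  then show ?thesis
    unfolding nnz_def by (simp add: card_SigmaI)
qed

lemma invertible_row_support_nonempty:
  fixes L :: "real^'n^'n"
  assumes "invertible L"
  shows "row_support L i \<noteq> {}"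
proof
  assume "row_support L i = {}"
  then have zero_row: "L $ i $ j = 0" for j
    by (auto simp: row_support_def)
  obtain B where "L ** B = mat 1"
    using assms invertible_right_inverse by blast
  moreover have "(L ** B) $ i $ i = 0"
    using zero_row by (simp add: matrix_matrix_mult_def)
  ultimately show False
    by (simp add: mat_def)
qed

lemma invertible_column_nonzero:
  fixes L :: "real^'n^'n"
  assumes "invertible L"
  shows "\<exists>i. L $ i $ j \<noteq> 0"
proof (rule ccontr)
  assume "\<nexists>i. L $ i $ j \<noteq> 0"
  then have zero_column: "L $ i $ j = 0" for i
    by blast
  obtain B where "B ** L = mat 1"
    using assms invertible_left_inverse by blast
  moreover have "(B ** L) $ j $ j = 0"
    using zero_column by (simp add: matrix_matrix_mult_def)
  ultimately show False
    by (simp add: mat_def)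
qed

lemma matrix_mult_row_if_row_support_subset:
  fixes A :: "('a::semiring_1)^'n^'m" and B :: "'a^'p^'n"
  assumes "row_support A a \<subseteq> {i}"
  shows "(A ** B) $ a $ j = A $ a $ i * B $ i $ j"
proof -
  have off_support: "A $ a $ l = 0" if "l \<noteq> i" for l
    using assms that by (auto simp: row_support_def)
  have "(A ** B) $ a $ j = (\<Sum>l\<in>UNIV. A $ a $ l * B $ l $ j)"
    by (simp add: matrix_matrix_mult_def)
  also have "\<dots> = (\<Sum>l\<in>UNIV. if l = i then A $ a $ i * B $ i $ j else 0)"
    using off_support by (intro sum.cong) auto
  also have "\<dots> = A $ a $ i * B $ i $ j"
    by simp
  finally show ?thesis .
qed

lemma row_support_mult_if_row_support_singleton:
  fixes A :: "('a::{semiring_1, semiring_no_zero_divisors})^'n^'m" and B :: "'a^'p^'n"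
  assumes "row_support A a = {i}"
  shows "row_support (A ** B) a = row_support B i"
proof -
  have "A $ a $ i \<noteq> 0"
    using assms by (auto simp: row_support_def)
  then show ?thesis
    using matrix_mult_row_if_row_support_subset[of A a i B] assms
    by (simp add: row_support_def)
qed

lemma row_support_cases:
  assumes "card (row_support M a) \<le> 1"
  obtains "row_support M a = {}" | i where "row_support M a = {i}"
  using assms by (metis card_0_eq card_1_singleton_iff finite le_Suc_eq le_zero_eq One_nat_def)

lemma card_row_support_le_mult:
  fixes A :: "real^'n^'m" and B :: "real^'p^'n"
  assumes "card (row_support A a) \<le> 1" and "\<And>i. row_support B i \<noteq> {}"
  shows "card (row_support A a) \<le> card (row_support (A ** B) a)"
  using assms(1)
proof (cases rule: row_support_cases)
  case (2 i)
  have "card (row_support B i) \<ge> 1"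
    using assms(2) by (simp add: Suc_leI card_gt_0_iff)
  with 2 show ?thesis
    by (simp add: row_support_mult_if_row_support_singleton)
qed simp

lemma row_support_singleton_if_nnz_mult_le:
  fixes A :: "real^'n^'m" and B :: "real^'p^'n"
  assumes A_rows: "\<And>a. card (row_support A a) \<le> 1"
    and A_cols: "\<And>i. \<exists>a. A $ a $ i \<noteq> 0"
    and B_rows: "\<And>i. row_support B i \<noteq> {}"
    and sparse: "nnz (A ** B) \<le> nnz A"
  shows "\<exists>t. row_support B i = {t}"
proof -
  let ?before = "\<lambda>a. card (row_support A a)"
  let ?after = "\<lambda>a. card (row_support (A ** B) a)"
  have row_le: "?before a \<le> ?after a" for a
    using A_rows B_rows by (rule card_row_support_le_mult)
  then have "sum ?before UNIV \<le> sum ?after UNIV"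
    by (rule sum_mono)
  then have sum_eq: "sum ?before UNIV = sum ?after UNIV"
    using sparse by (simp add: nnz_eq_sum_card_row_support)
  have row_eq: "?before a = ?after a" for a
    using sum_mono_inv[OF sum_eq row_le] by simp
  obtain a where "A $ a $ i \<noteq> 0"
    using A_cols by blast
  from A_rows[of a] have "row_support A a = {i}"
    using \<open>A $ a $ i \<noteq> 0\<close> by (cases rule: row_support_cases) (force simp: row_support_def)+
  then have "card (row_support B i) = 1"
    using row_eq[of a] by (simp add: row_support_mult_if_row_support_singleton)
  then show ?thesis
    by (simp add: card_1_singleton_iff)
qed

lemma permutation_scaling_if_nonzero_iff:
  fixes L :: "real^'n^'n"
  assumes "bij \<sigma>" and nonzero_iff: "\<And>i j. L $ i $ j \<noteq> 0 \<longleftrightarrow> i = \<sigma> j"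
  shows "\<exists>P D. permutation_matrix P \<and> diagonal_matrix D \<and> invertible D \<and> L = P ** D"
proof -
  define P :: "real^'n^'n" where "P = (\<chi> i j. if i = \<sigma> j then 1 else 0)"
  define D :: "real^'n^'n" where "D = (\<chi> i j. if i = j then L $ \<sigma> j $ j else 0)"
  have "permutation_matrix P"
    unfolding permutation_matrix_def P_def using \<open>bij \<sigma>\<close> by auto
  moreover have "diagonal_matrix D"
    unfolding diagonal_matrix_def D_def by auto
  moreover have "invertible D"
  proof -
    have "det D = (\<Prod>i\<in>UNIV. L $ \<sigma> i $ i)"
      by (subst det_diagonal) (simp_all add: D_def)
    also have "\<dots> \<noteq> 0"
      using nonzero_iff by simp
    finally show ?thesis
      by (simp add: invertible_det_nz)
  qed
  moreover have "L = P ** D"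
  proof -
    have "(P ** D) $ i $ j = P $ i $ j * L $ \<sigma> j $ j" for i j
      by (simp add: matrix_matrix_mult_def D_def if_distrib cong: if_cong)
    also have "\<dots> i j = L $ i $ j" for i j
      using nonzero_iff[of i j] by (auto simp: P_def)
    finally show ?thesis
      by (simp add: vec_eq_iff)
  qed
  ultimately show ?thesis
    by blast
qed

lemma permutation_scaling_if_row_support_singleton:
  fixes L :: "real^'n^'n"
  assumes rows: "\<And>i. \<exists>t. row_support L i = {t}" and cols: "\<And>j. \<exists>i. L $ i $ j \<noteq> 0"
  shows "\<exists>P D. permutation_matrix P \<and> diagonal_matrix D \<and> invertible D \<and> L = P ** D"
proof -
  obtain \<tau> where "\<And>i. row_support L i = {\<tau> i}"
    using rows by metis
  then have nonzero_iff: "L $ i $ j \<noteq> 0 \<longleftrightarrow> j = \<tau> i" for i j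
    by (auto simp: row_support_def)
  have "surj \<tau>"
    using cols nonzero_iff by (metis surjI)
  then have "bij \<tau>"
    by (simp add: bij_def finite_UNIV_surj_inj)
  show ?thesis
  proof (rule permutation_scaling_if_nonzero_iff)
    show "bij (inv \<tau>)"
      using \<open>bij \<tau>\<close> by (rule bij_imp_bij_inv)
    show "L $ i $ j \<noteq> 0 \<longleftrightarrow> i = inv \<tau> j" for i j
      using nonzero_iff bij_inv_eq_iff[OF \<open>bij \<tau>\<close>] by auto
  qed
qed

theorem proposition4p7:
  fixes \<Delta> :: "real^'k^'m" and L :: "real^'k^'k"
  assumes rows: "\<forall>a. card {i. \<Delta> $ a $ i \<noteq> 0} \<le> 1"
    and cols: "\<forall>i. \<exists>a. \<Delta> $ a $ i \<noteq> 0"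
    and inv: "invertible L"
    and sparse: "nnz (\<Delta> ** L) \<le> nnz \<Delta>"
  shows "\<exists>P D. permutation_matrix P \<and> diagonal_matrix D \<and> invertible D \<and> L = P ** D"
proof (rule permutation_scaling_if_row_support_singleton)
  show "\<exists>t. row_support L i = {t}" for i
    using rows cols invertible_row_support_nonempty[OF inv] sparse
    by (intro row_support_singleton_if_nnz_mult_le) (auto simp: row_support_def)
  show "\<exists>i. L $ i $ j \<noteq> 0" for j
    using inv by (rule invertible_column_nonzero)
qed

end
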